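(* Let $\varphi\colon G\to G$ be an endomorphism of an abelian group $G$. If $S\leq G$ is a positive generator for $\varphi$, then $h_{\mathrm{alg}}(\varphi)=h_{\mathrm{alg}}(\varphi,S)$. Likewise, if $\varphi$ is an automorphism and $S\leq G$ is a generator for $\varphi$, then $h_{\mathrm{alg}}(\varphi)=h_{\mathrm{alg}}(\varphi,S)$. In particular, every positively expansive endomorphism and every expansive automorphism has finite algebraic entropy.
   Context: $\mathbb N=\{0,1,2,\dots\}$. A finite subgroup $S\leq G$ is a positive generator for an endomorphism $\varphi$ if for every finite subgroup $F\leq G$ there is $n\in\mathbb N$ with $F\subseteq\sum_{k=0}^n\varphi^kS$; $\varphi$ is positively expansive if it has a positive generator. For an automorphism $\varphi$, a finite subgroup $S$ is a generator if for every finite subgroup $F\leq G$ there is $n\in\mathbb N$ with $F\subseteq\sum_{|k|\leq n}\varphi^kS$; $\varphi$ is expansive if it has a generator. For a finite subgroup $F\leq G$, $h_{\mathrm{alg}}(\varphi,F)=\limsup_{n}\frac1n\log\bigl|\sum_{k=0}^{n-1}\varphi^kF\bigr|$, and $h_{\mathrm{alg}}(\varphi)=\sup_F h_{\mathrm{alg}}(\varphi,F)$, the supremum over all finite subgroups $F\leq G$. *)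

theory Defs
  imports "HOL-Analysis.Analysis"
begin

text \<open>Abelian group G is modelled as a type of class ab_group_add (G = UNIV).\<close>

definition is_subgroup :: "'a::ab_group_add set \<Rightarrow> bool" where
  "is_subgroup H \<longleftrightarrow> 0 \<in> H \<and> (\<forall>x\<in>H. \<forall>y\<in>H. x + y \<in> H) \<and> (\<forall>x\<in>H. - x \<in> H)"

definition finite_subgroup :: "'a::ab_group_add set \<Rightarrow> bool" where
  "finite_subgroup H \<longleftrightarrow> is_subgroup H \<and> finite H"

definition endomorphism :: "('a::ab_group_add \<Rightarrow> 'a) \<Rightarrow> bool" where
  "endomorphism \<phi> \<longleftrightarrow> (\<forall>x y. \<phi> (x + y) = \<phi> x + \<phi> y)"

definition automorphism :: "('a::ab_group_add \<Rightarrow> 'a) \<Rightarrow> bool" where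
  "automorphism \<phi> \<longleftrightarrow> endomorphism \<phi> \<and> bij \<phi>"

definition sumset :: "'i set \<Rightarrow> ('i \<Rightarrow> 'a::comm_monoid_add set) \<Rightarrow> 'a set" where
  "sumset I A = {sum f I | f. \<forall>i\<in>I. f i \<in> A i}"

definition int_pow :: "('a \<Rightarrow> 'a) \<Rightarrow> int \<Rightarrow> 'a \<Rightarrow> 'a" where
  "int_pow \<phi> k = (if 0 \<le> k then \<phi> ^^ nat k else (inv \<phi>) ^^ nat (- k))"

definition positive_generator :: "('a::ab_group_add \<Rightarrow> 'a) \<Rightarrow> 'a set \<Rightarrow> bool" where
  "positive_generator \<phi> S \<longleftrightarrow> finite_subgroup S \<and>
     (\<forall>F. finite_subgroup F \<longrightarrow> (\<exists>n::nat. F \<subseteq> sumset {0..n} (\<lambda>k. (\<phi> ^^ k) ` S)))"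

definition positively_expansive :: "('a::ab_group_add \<Rightarrow> 'a) \<Rightarrow> bool" where
  "positively_expansive \<phi> \<longleftrightarrow> (\<exists>S. positive_generator \<phi> S)"

definition generator :: "('a::ab_group_add \<Rightarrow> 'a) \<Rightarrow> 'a set \<Rightarrow> bool" where
  "generator \<phi> S \<longleftrightarrow> finite_subgroup S \<and>
     (\<forall>F. finite_subgroup F \<longrightarrow>
        (\<exists>n::nat. F \<subseteq> sumset {- int n..int n} (\<lambda>k. int_pow \<phi> k ` S)))"

definition expansive :: "('a::ab_group_add \<Rightarrow> 'a) \<Rightarrow> bool" where
  "expansive \<phi> \<longleftrightarrow> (\<exists>S. generator \<phi> S)"

definition trajectory :: "('a::ab_group_add \<Rightarrow> 'a) \<Rightarrow> 'a set \<Rightarrow> nat \<Rightarrow> 'a set" where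
  "trajectory \<phi> F n = sumset {..<n} (\<lambda>k. (\<phi> ^^ k) ` F)"

definition h_alg_F :: "('a::ab_group_add \<Rightarrow> 'a) \<Rightarrow> 'a set \<Rightarrow> ereal" where
  "h_alg_F \<phi> F = limsup (\<lambda>n. ereal (ln (real (card (trajectory \<phi> F n))) / real n))"

definition h_alg :: "('a::ab_group_add \<Rightarrow> 'a) \<Rightarrow> ereal" where
  "h_alg \<phi> = (SUP F\<in>{F. finite_subgroup F}. h_alg_F \<phi> F)"

end

theory Submission
  imports Defs
begin

(* Write T_m(F) = F + phi F + ... + phi^(m-1) F. If F is contained in T_N(S) for a subgroup S,
   then T_m(F) is contained in the subgroup T_(m+N)(S), so |T_m(F)| <= |T_(m+N)(S)|.
   Since log |T_m(S)| <= m log |S| grows at most linearly, shifting the index by N does not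
   change the limsup of (log |T_m|)/m, and h_alg(phi,F) <= h_alg(phi,S).
   A positive generator S puts every finite subgroup F into some T_N(S). A generator of an
   automorphism only gives F inside phi^(-n) S + ... + phi^n S, but then phi^n F lies in
   T_(2n+1)(S), and the injective map phi^n, commuting with phi, carries T_m(F) bijectively onto
   T_m(phi^n F). Finiteness follows from h_alg(phi,S) <= log |S|. *)

lemma mem_sumset: "x \<in> sumset I A \<longleftrightarrow> (\<exists>f. x = sum f I \<and> (\<forall>i\<in>I. f i \<in> A i))"
  unfolding sumset_def by blast

lemma sumset_empty [simp]: "sumset {} A = {0}"
  unfolding sumset_def by auto

lemma sumset_cong:
  assumes "\<And>i. i \<in> I \<Longrightarrow> A i = B i"
  shows "sumset I A = sumset I B"
  unfolding sumset_def using assms by simp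

lemma sumset_nonempty:
  assumes "\<forall>i\<in>I. A i \<noteq> {}"
  shows "sumset I A \<noteq> {}"
proof -
  obtain f where "\<forall>i\<in>I. f i \<in> A i"
    using bchoice[of I "\<lambda>i x. x \<in> A i"] assms by blast
  then have "sum f I \<in> sumset I A" unfolding mem_sumset by blast
  then show ?thesis by blast
qed

lemma sumset_insert_subset:
  assumes "finite I" "i \<notin> I"
  shows "sumset (insert i I) A \<subseteq> (\<lambda>(x, y). x + y) ` (A i \<times> sumset I A)"
proof
  fix z assume "z \<in> sumset (insert i I) A"
  then obtain f where f: "z = sum f (insert i I)" "\<forall>j\<in>insert i I. f j \<in> A j"
    unfolding mem_sumset by blast
  then have "z = f i + sum f I" "f i \<in> A i" "sum f I \<in> sumset I A"
    using assms unfolding mem_sumset by auto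
  then show "z \<in> (\<lambda>(x, y). x + y) ` (A i \<times> sumset I A)" by force
qed

lemma finite_sumset:
  assumes "finite I" "\<forall>i\<in>I. finite (A i)"
  shows "finite (sumset I A)"
  using assms
proof (induction I rule: finite_induct)
  case (insert i I)
  have "finite ((\<lambda>(x, y). x + y) ` (A i \<times> sumset I A))" using insert by simp
  then show ?case using sumset_insert_subset[OF insert(1,2)] by (rule finite_subset[rotated])
qed simp

lemma card_sumset_le:
  assumes "finite I" "\<forall>i\<in>I. finite (A i)"
  shows "card (sumset I A) \<le> (\<Prod>i\<in>I. card (A i))"
  using assms
proof (induction I rule: finite_induct)
  case (insert i I)
  have "card (sumset (insert i I) A) \<le> card ((\<lambda>(x, y). x + y) ` (A i \<times> sumset I A))"
    using insert by (intro card_mono sumset_insert_subset) (auto intro: finite_sumset)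
  also have "\<dots> \<le> card (A i \<times> sumset I A)"
    using insert by (intro card_image_le) (auto intro: finite_sumset)
  also have "\<dots> = card (A i) * card (sumset I A)"
    by (rule card_cartesian_product)
  also have "\<dots> \<le> (\<Prod>i\<in>insert i I. card (A i))"
    using insert by simp
  finally show ?case .
qed simp

lemma sumset_reindex:
  assumes "bij_betw h J I"
  shows "sumset J (\<lambda>j. A (h j)) = sumset I A"
proof
  show "sumset J (\<lambda>j. A (h j)) \<subseteq> sumset I A"
  proof
    fix x assume "x \<in> sumset J (\<lambda>j. A (h j))"
    then obtain f where f: "x = sum f J" "\<forall>j\<in>J. f j \<in> A (h j)" unfolding mem_sumset by blast
    let ?g = "\<lambda>i. f (inv_into J h i)"
    have "sum ?g I = sum f J"
      using sum.reindex_bij_betw[OF assms, of ?g] assms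
      by (simp add: bij_betw_inv_into_left cong: sum.cong)
    moreover have "?g i \<in> A i" if "i \<in> I" for i
    proof -
      have "inv_into J h i \<in> J" "h (inv_into J h i) = i"
        using assms that by (auto intro: bij_betw_apply[OF bij_betw_inv_into] bij_betw_inv_into_right)
      then show ?thesis using f by metis
    qed
    ultimately show "x \<in> sumset I A" unfolding mem_sumset f(1) by (intro exI[of _ ?g]) auto
  qed
  show "sumset I A \<subseteq> sumset J (\<lambda>j. A (h j))"
  proof
    fix x assume "x \<in> sumset I A"
    then obtain f where f: "x = sum f I" "\<forall>i\<in>I. f i \<in> A i" unfolding mem_sumset by blast
    then have "x = sum (\<lambda>j. f (h j)) J" "\<forall>j\<in>J. f (h j) \<in> A (h j)"
      using assms sum.reindex_bij_betw[OF assms, of f] by (auto simp: bij_betw_def)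
    then show "x \<in> sumset J (\<lambda>j. A (h j))" unfolding mem_sumset by blast
  qed
qed

lemma sum_mem_subgroup:
  assumes "is_subgroup H" "\<forall>i\<in>I. f i \<in> H"
  shows "sum f I \<in> H"
  using assms(2)
  by (induction I rule: infinite_finite_induct) (use assms(1) in \<open>auto simp: is_subgroup_def\<close>)

lemma sumset_subset_subgroup:
  assumes "is_subgroup H" "\<forall>i\<in>I. A i \<subseteq> H"
  shows "sumset I A \<subseteq> H"
proof
  fix x assume "x \<in> sumset I A"
  then obtain f where "x = sum f I" "\<forall>i\<in>I. f i \<in> A i" unfolding mem_sumset by blast
  then show "x \<in> H" using assms sum_mem_subgroup[of H I f] by blast
qed

lemma summand_subset_sumset:
  assumes "finite I" "i \<in> I" "\<forall>j\<in>I. 0 \<in> A j"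
  shows "A i \<subseteq> sumset I A"
proof
  fix x assume "x \<in> A i"
  then have "x = sum (\<lambda>j. if j = i then x else 0) I" "\<forall>j\<in>I. (if j = i then x else 0) \<in> A j"
    using assms by auto
  then show "x \<in> sumset I A" unfolding mem_sumset by blast
qed

lemma is_subgroup_sumset:
  assumes "\<forall>i\<in>I. is_subgroup (A i)"
  shows "is_subgroup (sumset I A)"
  unfolding is_subgroup_def
proof (intro conjI ballI)
  show "0 \<in> sumset I A"
    using assms unfolding mem_sumset is_subgroup_def by (intro exI[of _ "\<lambda>_. 0"]) simp
next
  fix x y assume "x \<in> sumset I A" "y \<in> sumset I A"
  then obtain f g where "x = sum f I" "\<forall>i\<in>I. f i \<in> A i" "y = sum g I" "\<forall>i\<in>I. g i \<in> A i"
    unfolding mem_sumset by blast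
  then have "x + y = sum (\<lambda>i. f i + g i) I" "\<forall>i\<in>I. f i + g i \<in> A i"
    using assms by (auto simp: sum.distrib is_subgroup_def)
  then show "x + y \<in> sumset I A" unfolding mem_sumset by blast
next
  fix x assume "x \<in> sumset I A"
  then obtain f where "x = sum f I" "\<forall>i\<in>I. f i \<in> A i" unfolding mem_sumset by blast
  then have "- x = sum (\<lambda>i. - f i) I" "\<forall>i\<in>I. - f i \<in> A i"
    using assms by (auto simp: sum_negf is_subgroup_def)
  then show "- x \<in> sumset I A" unfolding mem_sumset by blast
qed

lemma endomorphism_zero: "endomorphism \<phi> \<Longrightarrow> \<phi> 0 = 0"
  unfolding endomorphism_def by (metis add_cancel_right_right)

lemma endomorphism_uminus: "endomorphism \<phi> \<Longrightarrow> \<phi> (- x) = - \<phi> x"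
  by (metis endomorphism_zero endomorphism_def add.right_inverse neg_eq_iff_add_eq_0)

lemma endomorphism_funpow: "endomorphism \<phi> \<Longrightarrow> endomorphism (\<phi> ^^ k)"
  by (induction k) (auto simp: endomorphism_def)

lemma endomorphism_sum: "endomorphism \<phi> \<Longrightarrow> \<phi> (sum f I) = (\<Sum>i\<in>I. \<phi> (f i))"
  by (induction I rule: infinite_finite_induct) (auto simp: endomorphism_zero endomorphism_def)

lemma is_subgroup_image:
  assumes "endomorphism \<phi>" "is_subgroup H"
  shows "is_subgroup (\<phi> ` H)"
  unfolding is_subgroup_def
proof (intro conjI ballI)
  show "0 \<in> \<phi> ` H"
    using assms endomorphism_zero[OF assms(1)] unfolding is_subgroup_def by (metis image_eqI)
next
  fix x y assume "x \<in> \<phi> ` H" "y \<in> \<phi> ` H"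
  then obtain a b where "a \<in> H" "b \<in> H" "x = \<phi> a" "y = \<phi> b" by blast
  then have "x + y = \<phi> (a + b)" "a + b \<in> H"
    using assms by (auto simp: endomorphism_def is_subgroup_def)
  then show "x + y \<in> \<phi> ` H" by blast
next
  fix x assume "x \<in> \<phi> ` H"
  then obtain a where "a \<in> H" "x = \<phi> a" by blast
  then have "- x = \<phi> (- a)" "- a \<in> H"
    using assms by (auto simp: endomorphism_uminus is_subgroup_def)
  then show "- x \<in> \<phi> ` H" by blast
qed

lemma image_sumset:
  assumes "endomorphism \<psi>"
  shows "\<psi> ` sumset I A = sumset I (\<lambda>i. \<psi> ` A i)"
proof
  show "\<psi> ` sumset I A \<subseteq> sumset I (\<lambda>i. \<psi> ` A i)"
  proof
    fix y assume "y \<in> \<psi> ` sumset I A"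
    then obtain x where "x \<in> sumset I A" "y = \<psi> x" by blast
    then obtain f where "y = \<psi> (sum f I)" "\<forall>i\<in>I. f i \<in> A i" unfolding mem_sumset by blast
    then have "y = (\<Sum>i\<in>I. \<psi> (f i))" "\<forall>i\<in>I. \<psi> (f i) \<in> \<psi> ` A i"
      using endomorphism_sum[OF assms] by auto
    then show "y \<in> sumset I (\<lambda>i. \<psi> ` A i)" unfolding mem_sumset by blast
  qed
  show "sumset I (\<lambda>i. \<psi> ` A i) \<subseteq> \<psi> ` sumset I A"
  proof
    fix y assume "y \<in> sumset I (\<lambda>i. \<psi> ` A i)"
    then obtain f where f: "y = sum f I" "\<forall>i\<in>I. \<exists>a\<in>A i. f i = \<psi> a" unfolding mem_sumset by blast
    then obtain g where g: "\<forall>i\<in>I. g i \<in> A i \<and> f i = \<psi> (g i)" by metis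
    then have "y = \<psi> (sum g I)" using f by (simp add: endomorphism_sum[OF assms])
    moreover have "sum g I \<in> sumset I A" using g unfolding mem_sumset by blast
    ultimately show "y \<in> \<psi> ` sumset I A" by blast
  qed
qed

lemma trajectory_nonempty: "S \<noteq> {} \<Longrightarrow> trajectory \<phi> S m \<noteq> {}"
  unfolding trajectory_def by (intro sumset_nonempty) auto

lemma finite_trajectory: "finite S \<Longrightarrow> finite (trajectory \<phi> S m)"
  unfolding trajectory_def by (intro finite_sumset) auto

lemma card_trajectory_le:
  assumes "finite S"
  shows "card (trajectory \<phi> S m) \<le> card S ^ m"
proof -
  have "card (trajectory \<phi> S m) \<le> (\<Prod>k<m. card ((\<phi> ^^ k) ` S))"
    unfolding trajectory_def using assms by (intro card_sumset_le) auto
  also have "\<dots> \<le> (\<Prod>k<m. card S)"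
    by (intro prod_mono) (simp add: card_image_le assms)
  finally show ?thesis by simp
qed

lemma is_subgroup_trajectory:
  "endomorphism \<phi> \<Longrightarrow> is_subgroup S \<Longrightarrow> is_subgroup (trajectory \<phi> S m)"
  unfolding trajectory_def by (intro is_subgroup_sumset ballI is_subgroup_image endomorphism_funpow)

lemma trajectory_image_funpow:
  assumes "endomorphism \<phi>"
  shows "trajectory \<phi> ((\<phi> ^^ n) ` F) m = (\<phi> ^^ n) ` trajectory \<phi> F m"
proof -
  have "(\<phi> ^^ k) ` (\<phi> ^^ n) ` F = (\<phi> ^^ n) ` (\<phi> ^^ k) ` F" for k
    by (simp add: image_comp funpow_add[symmetric] add.commute)
  then show ?thesis
    unfolding trajectory_def by (simp add: image_sumset endomorphism_funpow assms)
qed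

lemma trajectory_subset_trajectory:
  assumes "endomorphism \<phi>" "is_subgroup S" "F \<subseteq> trajectory \<phi> S N"
  shows "trajectory \<phi> F m \<subseteq> trajectory \<phi> S (m + N)"
proof -
  let ?T = "trajectory \<phi> S (m + N)"
  have T: "is_subgroup ?T" by (rule is_subgroup_trajectory[OF assms(1,2)])
  have "0 \<in> (\<phi> ^^ l) ` S" for l
    using endomorphism_zero[OF endomorphism_funpow[OF assms(1)]] assms(2)
    unfolding is_subgroup_def by (metis image_eqI)
  then have summand: "(\<phi> ^^ (k + j)) ` S \<subseteq> ?T" if "k < m" "j < N" for k j
    unfolding trajectory_def using that by (intro summand_subset_sumset) auto
  have "(\<phi> ^^ k) ` F \<subseteq> ?T" if "k < m" for k
  proof -
    have "(\<phi> ^^ k) ` F \<subseteq> (\<phi> ^^ k) ` trajectory \<phi> S N" using assms(3) by blast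
    also have "\<dots> = sumset {..<N} (\<lambda>j. (\<phi> ^^ (k + j)) ` S)"
      unfolding trajectory_def
      by (simp add: image_sumset endomorphism_funpow assms(1) image_comp funpow_add)
    also have "\<dots> \<subseteq> ?T"
      using summand \<open>k < m\<close> by (intro sumset_subset_subgroup[OF T]) simp
    finally show ?thesis .
  qed
  then show ?thesis
    unfolding trajectory_def[of \<phi> F] by (intro sumset_subset_subgroup[OF T]) auto
qed

lemma funpow_comp_int_pow:
  assumes "bij \<phi>" "- int n \<le> k"
  shows "\<phi> ^^ n \<circ> int_pow \<phi> k = \<phi> ^^ nat (k + int n)"
proof (cases "0 \<le> k")
  case True
  then have "nat (k + int n) = n + nat k" by simp
  then show ?thesis using True by (simp add: int_pow_def funpow_add)
next
  case False
  define j where "j = nat (- k)"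
  have "n = nat (k + int n) + j"
    using False assms(2) unfolding j_def by auto
  then have "\<phi> ^^ n = \<phi> ^^ nat (k + int n) \<circ> \<phi> ^^ j"
    by (metis funpow_add)
  moreover have "int_pow \<phi> k = inv \<phi> ^^ j"
    using False unfolding int_pow_def j_def by simp
  moreover have "(\<phi> ^^ j) ((inv \<phi> ^^ j) x) = x" for x
    using fun_cong[OF fn_o_inv_fn_is_id[OF assms(1)]] by simp
  ultimately show ?thesis by (simp add: fun_eq_iff)
qed

lemma image_sumset_int_pow:
  assumes "endomorphism \<phi>" "bij \<phi>"
  shows "(\<phi> ^^ n) ` sumset {- int n..int n} (\<lambda>k. int_pow \<phi> k ` S) = trajectory \<phi> S (Suc (2 * n))"
proof -
  have bij: "bij_betw (\<lambda>j. int j - int n) {..<Suc (2 * n)} {- int n..int n}"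
    by (rule bij_betw_byWitness[where f' = "\<lambda>k. nat (k + int n)"]) (auto simp: image_subset_iff)
  have "(\<phi> ^^ n) ` sumset {- int n..int n} (\<lambda>k. int_pow \<phi> k ` S)
      = sumset {- int n..int n} (\<lambda>k. (\<phi> ^^ n \<circ> int_pow \<phi> k) ` S)"
    by (simp add: image_sumset endomorphism_funpow assms(1) image_comp)
  also have "\<dots> = sumset {..<Suc (2 * n)} (\<lambda>j. (\<phi> ^^ n \<circ> int_pow \<phi> (int j - int n)) ` S)"
    by (rule sumset_reindex[OF bij, symmetric])
  also have "\<dots> = trajectory \<phi> S (Suc (2 * n))"
    unfolding trajectory_def by (intro sumset_cong) (simp add: funpow_comp_int_pow assms(2))
  finally show ?thesis .
qed

lemma limsup_div_le_const:
  fixes a :: "nat \<Rightarrow> real"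
  assumes "\<And>m. a m \<le> real m * K" "0 \<le> K"
  shows "limsup (\<lambda>m. ereal (a m / real m)) \<le> ereal K"
proof (rule Limsup_bounded[OF always_eventually], intro allI)
  fix m
  show "ereal (a m / real m) \<le> ereal K"
    using assms by (cases "m = 0") (simp_all add: divide_le_eq mult.commute)
qed

lemma limsup_div_le_shifted:
  fixes a b :: "nat \<Rightarrow> real"
  assumes a_le: "\<And>m. a m \<le> real m * K" and b_le: "\<And>m. b m \<le> a (m + c)"
  shows "limsup (\<lambda>m. ereal (b m / real m)) \<le> limsup (\<lambda>m. ereal (a m / real m))"
proof -
  let ?u = "\<lambda>m. ereal (a (m + c) / real (m + c))"
  let ?v = "\<lambda>m. ereal (K * real c / real m)"
  have "b m / real m \<le> a (m + c) / real (m + c) + K * real c / real m" if "0 < m" for m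
  proof -
    have "1 + real c / real m = real (m + c) / real m"
      using that by (simp add: add_divide_distrib)
    have "b m / real m \<le> a (m + c) / real m"
      using b_le[of m] that by (simp add: divide_right_mono)
    also have "\<dots> = a (m + c) / real (m + c) * (1 + real c / real m)"
      using that \<open>1 + real c / real m = real (m + c) / real m\<close> by simp
    also have "\<dots> = a (m + c) / real (m + c) + a (m + c) / real (m + c) * (real c / real m)"
      by (simp add: distrib_left)
    also have "\<dots> \<le> a (m + c) / real (m + c) + K * (real c / real m)"
    proof (intro add_left_mono mult_right_mono)
      show "a (m + c) / real (m + c) \<le> K"
        using a_le[of "m + c"] that by (simp add: divide_le_eq mult.commute)
    qed simp
    finally show ?thesis by simp
  qed
  then have "limsup (\<lambda>m. ereal (b m / real m)) \<le> limsup (\<lambda>m. ?u m + ?v m)"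
    by (intro Limsup_mono) (auto simp: eventually_sequentially intro!: exI[of _ 1])
  also have "\<dots> \<le> limsup ?u + limsup ?v"
    by (rule ereal_limsup_add_mono)
  also have "limsup ?u = limsup (\<lambda>m. ereal (a m / real m))"
    by (rule limsup_shift_k)
  also have "limsup ?v = 0"
    using lim_imp_Limsup[OF _ tendsto_ereal[OF lim_const_over_n]] by (simp add: zero_ereal_def)
  finally show ?thesis by simp
qed

lemma ln_card_trajectory_le:
  assumes "finite S" "S \<noteq> {}"
  shows "ln (card (trajectory \<phi> S m)) \<le> real m * ln (card S)"
proof -
  have "0 < card (trajectory \<phi> S m)"
    using assms by (simp add: card_gt_0_iff finite_trajectory trajectory_nonempty)
  moreover have "real (card (trajectory \<phi> S m)) \<le> real (card S) ^ m"
    using card_trajectory_le[OF assms(1)] by (simp flip: of_nat_power)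
  ultimately have "ln (card (trajectory \<phi> S m)) \<le> ln (real (card S) ^ m)"
    by (intro ln_mono) simp_all
  then show ?thesis by (simp add: ln_realpow)
qed

lemma h_alg_F_le_ln_card:
  assumes "finite S" "S \<noteq> {}"
  shows "h_alg_F \<phi> S \<le> ereal (ln (card S))"
  unfolding h_alg_F_def using assms
  by (intro limsup_div_le_const ln_card_trajectory_le) (simp_all add: Suc_leI card_gt_0_iff)

lemma h_alg_F_le_of_card_le:
  assumes "finite S" "S \<noteq> {}"
    and card_le: "\<And>m. card (trajectory \<phi> F m) \<le> card (trajectory \<phi> S (m + c))"
  shows "h_alg_F \<phi> F \<le> h_alg_F \<phi> S"
  unfolding h_alg_F_def
proof (rule limsup_div_le_shifted)
  show "ln (card (trajectory \<phi> S m)) \<le> real m * ln (card S)" for m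
    by (rule ln_card_trajectory_le[OF assms(1,2)])
  fix m
  have "0 < card (trajectory \<phi> S (m + c))"
    using assms by (simp add: card_gt_0_iff finite_trajectory trajectory_nonempty)
  then show "ln (card (trajectory \<phi> F m)) \<le> ln (card (trajectory \<phi> S (m + c)))"
    using card_le[of m] by (cases "card (trajectory \<phi> F m) = 0") simp_all
qed

lemma h_alg_F_le_of_subset_trajectory:
  assumes "endomorphism \<phi>" "finite_subgroup S" "F \<subseteq> trajectory \<phi> S N"
  shows "h_alg_F \<phi> F \<le> h_alg_F \<phi> S"
proof (rule h_alg_F_le_of_card_le)
  show "finite S" "S \<noteq> {}" using assms(2) by (auto simp: finite_subgroup_def is_subgroup_def)
  have "is_subgroup S" using assms(2) by (simp add: finite_subgroup_def)
  show "card (trajectory \<phi> F m) \<le> card (trajectory \<phi> S (m + N))" for m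
    by (rule card_mono[OF finite_trajectory[OF \<open>finite S\<close>]
          trajectory_subset_trajectory[OF assms(1) \<open>is_subgroup S\<close> assms(3)]])
qed

lemma h_alg_F_image_funpow:
  assumes "endomorphism \<phi>" "inj (\<phi> ^^ n)"
  shows "h_alg_F \<phi> ((\<phi> ^^ n) ` F) = h_alg_F \<phi> F"
  unfolding h_alg_F_def trajectory_image_funpow[OF assms(1)]
  using assms(2) by (simp add: card_image inj_on_subset)

lemma h_alg_eqI:
  assumes "finite_subgroup S" "\<And>F. finite_subgroup F \<Longrightarrow> h_alg_F \<phi> F \<le> h_alg_F \<phi> S"
  shows "h_alg \<phi> = h_alg_F \<phi> S"
  unfolding h_alg_def using assms by (intro antisym SUP_least SUP_upper) auto

lemma h_alg_positive_generator:
  assumes "endomorphism \<phi>" "positive_generator \<phi> S"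
  shows "h_alg \<phi> = h_alg_F \<phi> S"
proof (rule h_alg_eqI)
  show S: "finite_subgroup S" using assms(2) by (simp add: positive_generator_def)
  fix F :: "'a set" assume "finite_subgroup F"
  then obtain n where "F \<subseteq> sumset {0..n} (\<lambda>k. (\<phi> ^^ k) ` S)"
    using assms(2) by (auto simp: positive_generator_def)
  also have "{0..n} = {..<Suc n}" by auto
  finally have "F \<subseteq> trajectory \<phi> S (Suc n)" unfolding trajectory_def .
  then show "h_alg_F \<phi> F \<le> h_alg_F \<phi> S"
    by (rule h_alg_F_le_of_subset_trajectory[OF assms(1) S])
qed

lemma h_alg_generator:
  assumes "automorphism \<phi>" "generator \<phi> S"
  shows "h_alg \<phi> = h_alg_F \<phi> S"
proof (rule h_alg_eqI)
  have endo: "endomorphism \<phi>" and bij: "bij \<phi>" using assms(1) by (auto simp: automorphism_def)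
  show S: "finite_subgroup S" using assms(2) by (simp add: generator_def)
  fix F :: "'a set" assume "finite_subgroup F"
  then obtain n where "F \<subseteq> sumset {- int n..int n} (\<lambda>k. int_pow \<phi> k ` S)"
    using assms(2) by (auto simp: generator_def)
  then have "(\<phi> ^^ n) ` F \<subseteq> trajectory \<phi> S (Suc (2 * n))"
    using image_sumset_int_pow[OF endo bij] by blast
  then have "h_alg_F \<phi> ((\<phi> ^^ n) ` F) \<le> h_alg_F \<phi> S"
    by (rule h_alg_F_le_of_subset_trajectory[OF endo S])
  then show "h_alg_F \<phi> F \<le> h_alg_F \<phi> S"
    using h_alg_F_image_funpow[OF endo bij_is_inj[OF bij_fn[OF bij]]] by simp
qed

lemma h_alg_finite:
  assumes "finite_subgroup S" "h_alg \<phi> = h_alg_F \<phi> S"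
  shows "h_alg \<phi> < \<infinity>"
proof -
  have "h_alg \<phi> \<le> ereal (ln (card S))"
    using assms h_alg_F_le_ln_card[of S \<phi>] by (auto simp: finite_subgroup_def is_subgroup_def)
  then show ?thesis using le_less_trans by fastforce
qed

theorem theorem3p3:
  fixes \<phi> :: "'a::ab_group_add \<Rightarrow> 'a"
  shows "(\<forall>S. endomorphism \<phi> \<and> positive_generator \<phi> S \<longrightarrow> h_alg \<phi> = h_alg_F \<phi> S)
       \<and> (\<forall>S. automorphism \<phi> \<and> generator \<phi> S \<longrightarrow> h_alg \<phi> = h_alg_F \<phi> S)
       \<and> (endomorphism \<phi> \<and> positively_expansive \<phi> \<longrightarrow> h_alg \<phi> < \<infinity>)
       \<and> (automorphism \<phi> \<and> expansive \<phi> \<longrightarrow> h_alg \<phi> < \<infinity>)"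
proof (intro conjI allI impI)
  show "h_alg \<phi> = h_alg_F \<phi> S" if "endomorphism \<phi> \<and> positive_generator \<phi> S" for S
    using that h_alg_positive_generator by blast
  show "h_alg \<phi> = h_alg_F \<phi> S" if "automorphism \<phi> \<and> generator \<phi> S" for S
    using that h_alg_generator by blast
next
  assume "endomorphism \<phi> \<and> positively_expansive \<phi>"
  then obtain S where "endomorphism \<phi>" "positive_generator \<phi> S"
    by (auto simp: positively_expansive_def)
  then show "h_alg \<phi> < \<infinity>"
    by (intro h_alg_finite h_alg_positive_generator) (simp_all add: positive_generator_def)
next
  assume "automorphism \<phi> \<and> expansive \<phi>"
  then obtain S where "automorphism \<phi>" "generator \<phi> S"
    by (auto simp: expansive_def)
  then show "h_alg \<phi> < \<infinity>"
    by (intro h_alg_finite h_alg_generator) (simp_all add: generator_def)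
qed

end
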